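(* Let $m,\ell\in\mathbb N$. There exist $L_2(m,\ell)\in\mathbb N$ and $K_2(m,\ell)\in\mathbb N$ such that the following holds: if $\varepsilon_1,\dots,\varepsilon_m\in\{\pm1\}$ and $i_1,\dots,i_m\ge K_2(m,\ell)$ are integers with $\mathrm{gap}(i_1,\dots,i_m)\le\ell$, then $$\varepsilon_1a_{i_1}+\dots+\varepsilon_ma_{i_m}=0\quad\text{implies}\quad\varepsilon_1\eta^{i_1}+\dots+\varepsilon_m\eta^{i_m}=0,$$ and if $\varepsilon_1a_{i_1}+\dots+\varepsilon_ma_{i_m}\ne0$, then $$|\varepsilon_1a_{i_1}+\dots+\varepsilon_ma_{i_m}|\ge\eta^{\min\{i_1,\dots,i_m\}-L_2(m,\ell)}.$$
   Context: Standing setting: $d\in\mathbb N$; $\lambda_1,\dots,\lambda_d\in\mathbb C$ are the roots of an irreducible polynomial of degree $d$ with integer coefficients; $c_1,\dots,c_d\in\mathbb C$; the dominant root condition holds: $\lambda_1$ is real, $\lambda_1>1$, $\lambda_1>\max\{|\lambda_2|,\dots,|\lambda_d|\}$, $c_1\ne0$; $a_n=c_1\lambda_1^n+\dots+c_d\lambda_d^n$ is a positive integer for every $n\in\mathbb N$; and $\eta:=\lambda_1$. For integers $i_1,\dots,i_m$, let $i_{(1)}\le\dots\le i_{(m)}$ be the same numbers sorted nondecreasingly, and $\mathrm{gap}(i_1,\dots,i_m)=\max\{i_{(2)}-i_{(1)},\dots,i_{(m)}-i_{(m-1)}\}$ (taken to be $0$ if $m=1$). *)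

theory Defs
  imports "HOL-Analysis.Analysis" "HOL-Computational_Algebra.Polynomial"
begin

definition gap :: "int list \<Rightarrow> int" where
  "gap xs = (let s = sort xs in
     if length s \<le> 1 then 0
     else Max ((\<lambda>j. s ! (Suc j) - s ! j) ` {..<length s - 1}))"

definition lrs :: "nat \<Rightarrow> (nat \<Rightarrow> complex) \<Rightarrow> (nat \<Rightarrow> complex) \<Rightarrow> nat \<Rightarrow> complex" where
  "lrs d c lam n = (\<Sum>k=1..d. c k * lam k ^ n)"

end

theory Submission
  imports Defs "HOL-Computational_Algebra.Polynomial_Factorial" "HOL-Computational_Algebra.Field_as_Ring"
begin

text \<open>Write i_j = i_0 + t_j with i_0 the least index. The gap condition bounds each t_j by
  m l, so only finitely many polynomials Q = \<Sum>_j \<epsilon>_j X^(t_j) occur, and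
  \<Sum>_j \<epsilon>_j a_(i_j) = \<Sum>_k c_k Q(\<lambda>_k) \<lambda>_k^(i_0).
  If Q(\<eta>) = 0, then Q is divisible by the irreducible polynomial of \<eta>, hence vanishes at every
  conjugate \<lambda>_k, and the sum is 0. Otherwise the dominant term c_1 Q(\<eta>) \<eta>^(i_0) is nonzero and
  outweighs the others, giving the lower bound \<eta>^(i_0 - L) once i_0 is large; finiteness of
  the set of polynomials Q makes K and L uniform.\<close>

lemma map_poly_of_rat_add:
  "map_poly (of_rat :: rat \<Rightarrow> 'a::field_char_0) (p + q) = map_poly of_rat p + map_poly of_rat q"
  by (intro poly_eqI) (simp add: coeff_map_poly of_rat_add)

lemma map_poly_of_rat_mult:
  "map_poly (of_rat :: rat \<Rightarrow> 'a::field_char_0) (p * q) = map_poly of_rat p * map_poly of_rat q"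
  by (intro poly_eqI) (simp add: coeff_map_poly coeff_mult of_rat_sum of_rat_mult)

lemma irreducible_dvd_if_common_root:
  fixes q Q :: "rat poly" and a :: "'a::field_char_0"
  assumes "irreducible q"
    and "poly (map_poly of_rat q) a = 0" and "poly (map_poly of_rat Q) a = 0"
  shows "q dvd Q"
proof (rule ccontr)
  assume "\<not> q dvd Q"
  then have "coprime q Q"
    by (rule prime_elem_imp_coprime[OF irreducible_imp_prime_elem[OF assms(1)]])
  then have "fst (bezout_coefficients q Q) * q + snd (bezout_coefficients q Q) * Q = 1"
    using bezout_coefficients_fst_snd[of q Q] by simp
  then have "poly (map_poly of_rat (fst (bezout_coefficients q Q) * q
               + snd (bezout_coefficients q Q) * Q)) a = 1"
    by simp
  with assms(2,3) show False
    by (simp add: map_poly_of_rat_add map_poly_of_rat_mult)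
qed

lemma degree_pos_if_irreducible:
  fixes q :: "'a::field poly"
  assumes "irreducible q"
  shows "degree q > 0"
  using assms is_unit_iff_degree[of q] by (auto simp: irreducible_def)

lemma lrs_normalized_tendsto:
  fixes f lam :: "nat \<Rightarrow> complex" and \<eta> :: real
  assumes "d \<ge> 1" and "lam 1 = of_real \<eta>" and "\<eta> > 0"
    and "\<And>k. k \<in> {2..d} \<Longrightarrow> cmod (lam k) < \<eta>"
  shows "(\<lambda>n. lrs d f lam n / of_real (\<eta> ^ n)) \<longlonglongrightarrow> f 1"
proof -
  have "{1..d} = insert 1 {2..d}"
    using assms(1) by auto
  then have split: "lrs d f lam n / of_real (\<eta> ^ n)
      = f 1 + (\<Sum>k=2..d. f k * (lam k / of_real \<eta>) ^ n)" for n
    using assms(2,3) by (simp add: lrs_def sum_divide_distrib power_divide add_divide_distrib)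
  have "(\<lambda>n. \<Sum>k=2..d. f k * (lam k / of_real \<eta>) ^ n) \<longlonglongrightarrow> (\<Sum>k=2..d. f k * 0)"
  proof (intro tendsto_sum tendsto_mult tendsto_const LIMSEQ_power_zero)
    fix k
    assume "k \<in> {2..d}"
    then show "norm (lam k / of_real \<eta>) < 1"
      using assms(3,4) by (simp add: norm_divide)
  qed
  then show ?thesis
    unfolding split using tendsto_add[OF tendsto_const] by fastforce
qed

lemma lrs_dominant_lower_bound:
  fixes f lam :: "nat \<Rightarrow> complex" and \<eta> :: real
  assumes "d \<ge> 1" and "lam 1 = of_real \<eta>" and "\<eta> > 1"
    and "\<And>k. k \<in> {2..d} \<Longrightarrow> cmod (lam k) < \<eta>" and "f 1 \<noteq> 0"
  shows "\<exists>L::nat. \<forall>\<^sub>F n in sequentially. \<eta> powi (int n - int L) \<le> cmod (lrs d f lam n)"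
proof -
  have "(\<lambda>n. cmod (lrs d f lam n / of_real (\<eta> ^ n))) \<longlonglongrightarrow> cmod (f 1)"
    using lrs_normalized_tendsto[of d lam \<eta> f] assms(1-4) by (intro tendsto_norm) auto
  moreover have "cmod (f 1) / 2 < cmod (f 1)"
    using assms(5) by simp
  ultimately have "\<forall>\<^sub>F n in sequentially. cmod (f 1) / 2 < cmod (lrs d f lam n / of_real (\<eta> ^ n))"
    by (rule order_tendstoD)
  then have ev: "\<forall>\<^sub>F n in sequentially. cmod (f 1) / 2 < cmod (lrs d f lam n) / \<eta> ^ n"
    using assms(3) by (simp add: norm_divide norm_power)
  obtain L where L: "2 / cmod (f 1) < \<eta> ^ L"
    using real_arch_pow[OF assms(3)] by blast
  have bound: "\<eta> powi (int n - int L) \<le> cmod (lrs d f lam n)"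
    if "cmod (f 1) / 2 < cmod (lrs d f lam n) / \<eta> ^ n" for n
  proof -
    have pos: "\<eta> ^ n > 0" "\<eta> ^ L > 0"
      using assms(3) by auto
    have "\<eta> powi (int n - int L) = \<eta> ^ n / \<eta> ^ L"
      using assms(3) by (simp add: power_int_diff power_int_of_nat)
    also have "\<dots> \<le> \<eta> ^ n * (cmod (f 1) / 2)"
      using L pos assms(5) by (simp add: field_simps)
    also have "\<dots> \<le> cmod (lrs d f lam n)"
      using that pos by (simp add: field_simps)
    finally show ?thesis .
  qed
  have "\<forall>\<^sub>F n in sequentially. \<eta> powi (int n - int L) \<le> cmod (lrs d f lam n)"
    using ev by (rule eventually_mono) (rule bound)
  then show ?thesis ..
qed

lemma nth_le_nth_0_plus_if_steps_le:
  fixes s :: "int list"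
  assumes "\<And>j. Suc j < length s \<Longrightarrow> s ! Suc j - s ! j \<le> l" and "k < length s"
  shows "s ! k \<le> s ! 0 + int k * l"
  using assms(2)
proof (induction k)
  case (Suc k)
  then show ?case
    using assms(1)[of k] by (simp add: algebra_simps)
qed simp

lemma sort_consecutive_diff_le_gap:
  assumes "Suc j < length xs"
  shows "sort xs ! Suc j - sort xs ! j \<le> gap xs"
proof -
  have "gap xs = Max ((\<lambda>j. sort xs ! Suc j - sort xs ! j) ` {..<length xs - 1})"
    using assms by (simp add: gap_def Let_def)
  then show ?thesis
    using assms by (simp add: Max_ge)
qed

lemma le_Min_plus_if_gap_le:
  fixes xs :: "nat list"
  assumes "gap (map int xs) \<le> int l" and "x \<in> set xs"
  shows "x \<le> Min (set xs) + length xs * l"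
proof -
  define s where "s = sort (map int xs)"
  have "sorted s" and len: "length s = length xs" and set_s: "set s = int ` set xs"
    by (auto simp: s_def)
  have steps: "s ! Suc j - s ! j \<le> int l" if "Suc j < length s" for j
    using sort_consecutive_diff_le_gap[of j "map int xs"] that assms(1) by (simp add: s_def)
  obtain k where k: "k < length s" "s ! k = int x"
    using assms(2) set_s by (metis imageI in_set_conv_nth)
  have "Min (set xs) \<in> set xs"
    using assms(2) by (intro Min_in) auto
  then have "int (Min (set xs)) \<in> set s"
    using set_s by simp
  then have "s ! 0 \<le> int (Min (set xs))"
    using \<open>sorted s\<close> by (metis in_set_conv_nth le0 sorted_nth_mono)
  moreover have "int k * int l \<le> int (length xs) * int l"
    using k(1) len by (intro mult_right_mono) auto
  ultimately have "int x \<le> int (Min (set xs) + length xs * l)"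
    using nth_le_nth_0_plus_if_steps_le[where l = "int l", OF steps k(1)] k(2) by simp
  then show ?thesis
    by linarith
qed

lemma sum_lrs_shifts:
  fixes e :: "nat \<Rightarrow> complex"
  shows "(\<Sum>j<m. e j * lrs d c lam (n + t j)) = lrs d (\<lambda>k. c k * (\<Sum>j<m. e j * lam k ^ t j)) lam n"
  unfolding lrs_def
  by (simp add: sum_distrib_left sum_distrib_right power_add mult_ac sum.swap[of _ "{..<m}"])

definition signed_monomials :: "int list \<Rightarrow> nat list \<Rightarrow> rat poly" where
  "signed_monomials es ts = (\<Sum>j<length es. monom (of_int (es ! j)) (ts ! j))"

lemma poly_signed_monomials:
  "poly (map_poly (of_rat :: rat \<Rightarrow> 'a::field_char_0) (signed_monomials es ts)) z
     = (\<Sum>j<length es. of_int (es ! j) * z ^ (ts ! j))"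
proof -
  have "map_poly (of_rat :: rat \<Rightarrow> 'a) (signed_monomials es ts)
        = (\<Sum>j<length es. monom (of_int (es ! j)) (ts ! j))"
    by (intro poly_eqI)
      (simp add: signed_monomials_def coeff_map_poly coeff_sum of_rat_sum coeff_monom if_distrib
        cong: if_cong)
  then show ?thesis
    by (simp add: poly_sum poly_monom)
qed

definition signed_monomial_shapes :: "nat \<Rightarrow> nat \<Rightarrow> rat poly set" where
  "signed_monomial_shapes m B = case_prod signed_monomials `
     ({es. set es \<subseteq> {1, -1} \<and> length es = m} \<times> {ts. set ts \<subseteq> {..B} \<and> length ts = m})"

lemma finite_signed_monomial_shapes: "finite (signed_monomial_shapes m B)"
  unfolding signed_monomial_shapes_def
  by (intro finite_imageI finite_cartesian_product finite_lists_length_eq) auto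

lemma signed_monomials_in_shapes:
  assumes "set es \<subseteq> {1, -1}" and "length es = m" and "length ts = m" and "\<And>t. t \<in> set ts \<Longrightarrow> t \<le> B"
  shows "signed_monomials es ts \<in> signed_monomial_shapes m B"
  unfolding signed_monomial_shapes_def using assms by (intro rev_image_eqI[of "(es, ts)"]) auto

lemma sum_powers_signed_monomials:
  fixes z :: "'a::field_char_0"
  assumes "length is = length es" and "\<And>i. i \<in> set is \<Longrightarrow> i0 \<le> i"
  shows "(\<Sum>j<length es. of_int (es ! j) * z ^ (is ! j))
    = z ^ i0 * poly (map_poly of_rat (signed_monomials es (map (\<lambda>i. i - i0) is))) z"
proof -
  have "z ^ (is ! j) = z ^ i0 * z ^ (is ! j - i0)" if "j < length es" for j
    using assms that by (simp flip: power_add)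
  then show ?thesis
    using assms(1) by (simp add: poly_signed_monomials sum_distrib_left mult.left_commute)
qed

lemma sum_lrs_signed_monomials:
  assumes "length is = length es" and "\<And>i. i \<in> set is \<Longrightarrow> i0 \<le> i"
  shows "(\<Sum>j<length es. of_int (es ! j) * lrs d c lam (is ! j))
    = lrs d (\<lambda>k. c k * poly (map_poly of_rat (signed_monomials es (map (\<lambda>i. i - i0) is))) (lam k))
        lam i0"
proof -
  have "is ! j = i0 + map (\<lambda>i. i - i0) is ! j" if "j < length es" for j
    using assms that by simp
  then have "(\<Sum>j<length es. of_int (es ! j) * lrs d c lam (is ! j))
      = (\<Sum>j<length es. of_int (es ! j) * lrs d c lam (i0 + map (\<lambda>i. i - i0) is ! j))"
    by (intro sum.cong) simp_all
  also have "\<dots> = lrs d (\<lambda>k. c k * (\<Sum>j<length es. of_int (es ! j) * lam k ^ (map (\<lambda>i. i - i0) is ! j)))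
      lam i0"
    by (rule sum_lrs_shifts)
  finally show ?thesis
    by (simp add: poly_signed_monomials)
qed

locale dominant_conjugate_lrs =
  fixes d :: nat and lam c :: "nat \<Rightarrow> complex" and q :: "rat poly" and \<eta> :: real
  assumes d_pos: "d \<ge> 1"
    and irreducible_q: "irreducible q"
    and q_roots: "\<And>k. k \<in> {1..d} \<Longrightarrow> poly (map_poly of_rat q) (lam k) = 0"
    and dominant_real: "lam 1 = of_real \<eta>"
    and dominant_gt_1: "\<eta> > 1"
    and dominant: "\<And>k. k \<in> {2..d} \<Longrightarrow> cmod (lam k) < \<eta>"
    and dominant_coeff_nonzero: "c 1 \<noteq> 0"
begin

text \<open>For Q = \<Sum>_j e_j X^(t_j) this is n \<mapsto> \<Sum>_j e_j a_(n + t_j),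
  see \<open>sum_lrs_signed_monomials\<close>.\<close>

definition poly_shift :: "rat poly \<Rightarrow> nat \<Rightarrow> complex" where
  "poly_shift Q = lrs d (\<lambda>k. c k * poly (map_poly of_rat Q) (lam k)) lam"

lemma poly_shift_eq_0_if_root:
  assumes "poly (map_poly of_rat Q) (lam 1) = 0"
  shows "poly_shift Q n = 0"
proof -
  have "q dvd Q"
    using irreducible_dvd_if_common_root[OF irreducible_q q_roots assms] d_pos by simp
  then have "poly (map_poly of_rat Q) (lam k) = 0" if "k \<in> {1..d}" for k
    using q_roots[OF that] by (auto simp: map_poly_of_rat_mult elim!: dvdE)
  then show ?thesis
    by (simp add: poly_shift_def lrs_def)
qed

lemma poly_shift_lower_bound:
  assumes "poly (map_poly of_rat Q) (lam 1) \<noteq> 0"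
  shows "\<exists>L::nat. \<forall>\<^sub>F n in sequentially. \<eta> powi (int n - int L) \<le> cmod (poly_shift Q n)"
  unfolding poly_shift_def
  using lrs_dominant_lower_bound[where lam = lam and \<eta> = \<eta>, OF d_pos dominant_real dominant_gt_1 dominant]
    assms dominant_coeff_nonzero by simp

lemma signed_sums_eq_poly_shift:
  assumes "length es = m" and "length is = m" and "\<And>i. i \<in> set is \<Longrightarrow> i0 \<le> i"
  shows "(\<Sum>j<m. of_int (es ! j) * lrs d c lam (is ! j))
      = poly_shift (signed_monomials es (map (\<lambda>i. i - i0) is)) i0"
    and "of_real (\<Sum>j<m. of_int (es ! j) * \<eta> ^ (is ! j))
      = lam 1 ^ i0 * poly (map_poly of_rat (signed_monomials es (map (\<lambda>i. i - i0) is))) (lam 1)"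
  using sum_lrs_signed_monomials[of "is" es i0 d c lam]
    sum_powers_signed_monomials[of "is" es i0 "of_real \<eta>"] assms
  unfolding dominant_real by (simp_all add: poly_shift_def)

lemma uniform_poly_shift_lower_bound:
  assumes "finite A"
  obtains L K :: nat where
    "\<And>Q n. Q \<in> A \<Longrightarrow> K \<le> n \<Longrightarrow> poly (map_poly of_rat Q) (lam 1) \<noteq> 0 \<Longrightarrow>
       \<eta> powi (int n - int L) \<le> cmod (poly_shift Q n)"
proof -
  obtain L where L: "\<And>Q. poly (map_poly of_rat Q) (lam 1) \<noteq> 0 \<Longrightarrow>
      \<forall>\<^sub>F n in sequentially. \<eta> powi (int n - int (L Q)) \<le> cmod (poly_shift Q n)"
    using poly_shift_lower_bound by metis
  have "\<forall>Q\<in>A. \<forall>\<^sub>F n in sequentially. poly (map_poly of_rat Q) (lam 1) \<noteq> 0 \<longrightarrow>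
      \<eta> powi (int n - int (Max (L ` A))) \<le> cmod (poly_shift Q n)"
  proof (intro ballI, goal_cases)
    case (1 Q)
    show ?case
    proof (cases "poly (map_poly of_rat Q) (lam 1) = 0")
      case False
      have mono: "\<eta> powi (int n - int (Max (L ` A))) \<le> \<eta> powi (int n - int (L Q))" for n
        using assms 1 dominant_gt_1 by (intro power_int_increasing) auto
      show ?thesis
        using L[OF False] by (rule eventually_mono) (meson mono order_trans)
    qed simp
  qed
  from eventually_ball_finite[OF assms this] obtain K where
    "\<And>Q n. Q \<in> A \<Longrightarrow> K \<le> n \<Longrightarrow> poly (map_poly of_rat Q) (lam 1) \<noteq> 0 \<Longrightarrow>
       \<eta> powi (int n - int (Max (L ` A))) \<le> cmod (poly_shift Q n)"
    unfolding eventually_sequentially by blast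
  then show thesis
    by (rule that)
qed

lemma signed_sum_dichotomy:
  obtains L K :: nat where
    "\<And>es is. length es = m \<Longrightarrow> length is = m \<Longrightarrow> set es \<subseteq> {1, -1} \<Longrightarrow>
       (\<And>i. i \<in> set is \<Longrightarrow> K \<le> i \<and> i \<le> Min (set is) + B) \<Longrightarrow>
       ((\<Sum>j<m. of_int (es ! j) * lrs d c lam (is ! j)) = 0
          \<longrightarrow> (\<Sum>j<m. of_int (es ! j) * \<eta> ^ (is ! j)) = 0)
     \<and> ((\<Sum>j<m. of_int (es ! j) * lrs d c lam (is ! j)) \<noteq> 0
          \<longrightarrow> \<eta> powi (int (Min (set is)) - int L) \<le> cmod (\<Sum>j<m. of_int (es ! j) * lrs d c lam (is ! j)))"
proof -
  obtain L K where K: "\<And>Q n. Q \<in> signed_monomial_shapes m B \<Longrightarrow> K \<le> n \<Longrightarrow>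
      poly (map_poly of_rat Q) (lam 1) \<noteq> 0 \<Longrightarrow> \<eta> powi (int n - int L) \<le> cmod (poly_shift Q n)"
    using uniform_poly_shift_lower_bound[OF finite_signed_monomial_shapes] by blast
  show thesis
  proof (rule that[where L = L and K = K], goal_cases)
    case (1 es "is")
    show ?case
    proof (cases "m = 0")
      case False
      define i0 where "i0 = Min (set is)"
      define Q where "Q = signed_monomials es (map (\<lambda>i. i - i0) is)"
      have "i0 \<in> set is"
        using False 1 unfolding i0_def by (intro Min_in) auto
      then have "K \<le> i0"
        using 1 by blast
      have le: "i0 \<le> i" if "i \<in> set is" for i
        using that by (simp add: i0_def)
      note sums = signed_sums_eq_poly_shift[OF 1(1,2) le, folded Q_def]
      have "i - i0 \<le> B" if "i \<in> set is" for i
        using 1(4)[OF that] unfolding i0_def by linarith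
      then have "Q \<in> signed_monomial_shapes m B"
        unfolding Q_def using 1 by (intro signed_monomials_in_shapes) auto
      show ?thesis
      proof (cases "poly (map_poly of_rat Q) (lam 1) = 0")
        case True
        have "(\<Sum>j<m. of_int (es ! j) * \<eta> ^ (is ! j)) = 0"
          using sums(2) True by (simp only: mult_zero_right of_real_eq_0_iff)
        with True show ?thesis
          using sums(1) poly_shift_eq_0_if_root by simp
      next
        case False
        have "\<eta> powi (int i0 - int L) \<le> cmod (poly_shift Q i0)"
          using K[OF \<open>Q \<in> signed_monomial_shapes m B\<close> \<open>K \<le> i0\<close> False] .
        moreover have "\<eta> powi (int i0 - int L) > 0"
          using dominant_gt_1 by simp
        ultimately show ?thesis
          using sums(1) by (auto simp: i0_def)
      qed
    qed simp
  qed
qed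

end

lemma dominant_conjugate_lrs_of_int_poly:
  fixes p :: "int poly"
  assumes "irreducible (map_poly rat_of_int p)" and "degree p = d"
    and "map_poly of_int p = smult (of_int (lead_coeff p)) (\<Prod>k=1..d. [:- lam k, 1:])"
    and "lam 1 = of_real \<eta>" and "\<eta> > 1" and "\<And>k. k \<in> {2..d} \<Longrightarrow> cmod (lam k) < \<eta>"
    and "c 1 \<noteq> 0"
  shows "dominant_conjugate_lrs d lam c (map_poly rat_of_int p) \<eta>"
proof
  have "degree (map_poly rat_of_int p) > 0"
    using assms(1) by (rule degree_pos_if_irreducible)
  then show "d \<ge> 1"
    using assms(2) by (simp add: degree_map_poly)
next
  fix k
  assume "k \<in> {1..d}"
  then have "(\<Prod>j=1..d. poly [:- lam j, 1:] (lam k)) = 0"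
    by (intro prod_zero) auto
  then show "poly (map_poly of_rat (map_poly rat_of_int p)) (lam k) = 0"
    by (simp add: map_poly_map_poly o_def assms(3) poly_prod)
qed (use assms in auto)

theorem lemma6p3:
  fixes d :: nat and lam c :: "nat \<Rightarrow> complex" and p :: "int poly" and \<eta> :: real
  assumes irr: "irreducible (map_poly rat_of_int p)"
    and deg: "degree p = d"
    and roots: "map_poly of_int p = smult (of_int (lead_coeff p)) (\<Prod>k=1..d. [:- lam k, 1:])"
    and dom_real: "lam 1 = complex_of_real \<eta>"
    and dom_gt1: "\<eta> > 1"
    and dom: "\<And>k. k \<in> {2..d} \<Longrightarrow> cmod (lam k) < \<eta>"
    and c1: "c 1 \<noteq> 0"
    and pos: "\<And>n. n \<ge> 1 \<Longrightarrow> \<exists>z::nat. z > 0 \<and> lrs d c lam n = of_nat z"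
  shows "\<forall>m l :: nat. \<exists>L2 K2 :: nat. \<forall>es :: int list. \<forall>is :: nat list.
           length es = m \<and> length is = m \<and> (\<forall>e\<in>set es. e = 1 \<or> e = -1)
           \<and> (\<forall>i\<in>set is. i \<ge> K2) \<and> gap (map int is) \<le> int l \<longrightarrow>
           ((\<Sum>j<m. of_int (es ! j) * lrs d c lam (is ! j)) = 0
              \<longrightarrow> (\<Sum>j<m. of_int (es ! j) * \<eta> ^ (is ! j)) = 0)
         \<and> ((\<Sum>j<m. of_int (es ! j) * lrs d c lam (is ! j)) \<noteq> 0
              \<longrightarrow> cmod (\<Sum>j<m. of_int (es ! j) * lrs d c lam (is ! j))
                   \<ge> \<eta> powi (int (Min (set is)) - int L2))"
proof -
  interpret dominant_conjugate_lrs d lam c "map_poly rat_of_int p" \<eta>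
    using irr deg roots dom_real dom_gt1 dom c1 by (rule dominant_conjugate_lrs_of_int_poly)
  show ?thesis
  proof (intro allI, goal_cases)
    case (1 m l)
    show ?case
    proof (rule signed_sum_dichotomy[of m "m * l"], goal_cases)
      case (1 L K)
      show ?case
      proof (rule exI[of _ L], rule exI[of _ K], intro allI impI, elim conjE, rule 1)
        fix es :: "int list" and "is" :: "nat list" and i :: nat
        assume "length is = m" "\<forall>i\<in>set is. K \<le> i" "gap (map int is) \<le> int l" "i \<in> set is"
        then show "K \<le> i \<and> i \<le> Min (set is) + m * l"
          using le_Min_plus_if_gap_le by auto
      qed auto
    qed
  qed
qed

end
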